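(* Let $\mathcal{P}=\{1,\dots,p\}$, let $M(1),\dots,M(p)\in\mathbb{R}^{n\times n}$ be exponentially stable (Hurwitz) matrices, and let $N\in\mathbb{R}^{n\times n}$ be a fixed matrix. Let $\tau_D>0$, $N_0>0$ and $\lambda>0$. Then there exists $g_0>0$ such that for every $g\ge g_0$ there is a constant $c>0$ such that, for every switching signal $\sigma\in\mathcal{S}_{ave}(\tau_D,N_0)$ and every initial condition, the solution of $\dot x=\big(N+gM(\sigma(t))\big)x$ satisfies $\|x(t)\|\le c\,e^{-\lambda t}\|x(0)\|$ for all $t\ge0$.
   Context: A switching signal is a piecewise-constant, right-continuous map $\sigma:[0,\infty)\to\mathcal{P}$ with finitely many discontinuities on each bounded interval. For $t\ge t_0\ge0$, $N_\sigma(t_0,t)$ is the number of discontinuities of $\sigma$ in the open interval $(t_0,t)$, and $\mathcal{S}_{ave}(\tau_D,N_0)$ is the set of switching signals with $N_\sigma(t_0,t)\le N_0+\frac{t-t_0}{\tau_D}$ for all $t\ge t_0\ge0$. $\|\cdot\|$ is any vector norm (with induced matrix norm). *)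

theory Defs
  imports "HOL-Analysis.Analysis"
begin

definition hurwitz :: "real^'n^'n \<Rightarrow> bool" where
  "hurwitz A \<longleftrightarrow>
     (\<forall>(\<mu>::complex) (v::complex^'n). v \<noteq> 0 \<and>
        (\<chi> i j. complex_of_real (A$i$j)) *v v = \<mu> *s v \<longrightarrow> Re \<mu> < 0)"

definition disc_pts :: "(real \<Rightarrow> nat) \<Rightarrow> real set" where
  "disc_pts \<sigma> = {t. 0 \<le> t \<and> \<not> continuous (at t within {0..}) \<sigma>}"

definition switching_signal :: "nat set \<Rightarrow> (real \<Rightarrow> nat) \<Rightarrow> bool" where
  "switching_signal P \<sigma> \<longleftrightarrow>
     (\<forall>t\<ge>0. \<sigma> t \<in> P) \<and>
     (\<forall>t\<ge>0. \<exists>\<epsilon>>0. \<forall>s\<in>{t..<t+\<epsilon>}. \<sigma> s = \<sigma> t) \<and>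
     (\<forall>T. finite (disc_pts \<sigma> \<inter> {0..T}))"

definition N_sigma :: "(real \<Rightarrow> nat) \<Rightarrow> real \<Rightarrow> real \<Rightarrow> nat" where
  "N_sigma \<sigma> t0 t = card (disc_pts \<sigma> \<inter> {t0<..<t})"

definition S_ave :: "nat set \<Rightarrow> real \<Rightarrow> real \<Rightarrow> (real \<Rightarrow> nat) set" where
  "S_ave P \<tau>D N0 = {\<sigma>. switching_signal P \<sigma> \<and>
      (\<forall>t0 t. 0 \<le> t0 \<and> t0 \<le> t \<longrightarrow> real (N_sigma \<sigma> t0 t) \<le> N0 + (t - t0) / \<tau>D)}"

definition switched_solution ::
  "(nat \<Rightarrow> real^'n^'n) \<Rightarrow> (real \<Rightarrow> nat) \<Rightarrow> (real \<Rightarrow> real^'n) \<Rightarrow> bool" where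
  "switched_solution A \<sigma> x \<longleftrightarrow>
     continuous_on {0..} x \<and>
     (\<forall>t. 0 \<le> t \<and> t \<notin> disc_pts \<sigma> \<longrightarrow>
        (x has_vector_derivative (A (\<sigma> t) *v x t)) (at t within {0..}))"

end

theory Submission
  imports Defs "Jordan_Normal_Form.Schur_Decomposition"
begin

text \<open>Triangularize each Hurwitz mode \<open>M\<close> over \<open>\<complex>\<close> and rescale the Schur basis by powers
  of a small \<open>\<epsilon>\<close>: the off-diagonal part becomes negligible, which yields linear coordinates
  \<open>L\<close> with \<open>\<langle>L z, L (M z)\<rangle> \<le> -\<alpha> \<parallel>L z\<parallel>\<^sup>2\<close>. In these coordinates \<open>N\<close> costs at most a constant
  \<open>K\<close>, so \<open>V = \<parallel>L z\<parallel>\<^sup>2\<close> decays at rate \<open>2 (g \<alpha> - K)\<close> along every mode of \<open>N + g M\<close>.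
  At a switch \<open>V\<close> changes coordinates and can grow by at most a factor \<open>B\<close>; the average
  dwell time bounds the number of switches by \<open>N0 + t / \<tau>D\<close>, so switching costs the
  exponential rate \<open>ln B / (2 \<tau>D)\<close>, which a large gain \<open>g\<close> absorbs.\<close>

no_notation Matrix.vec_index (infixl \<open>$\<close> 100)
hide_const (open) Matrix.mat

text \<open>Schur decomposition is available for the matrices of \<open>Jordan_Normal_Form\<close> only; a
  bijection \<open>h\<close> from the index type onto \<open>{0..<n}\<close> transports matrices between the two
  representations.\<close>
definition of_mat :: "('n \<Rightarrow> nat) \<Rightarrow> 'a mat \<Rightarrow> 'a^'n^'n" where
  "of_mat h B = (\<chi> i j. B $$ (h i, h j))"

definition to_mat :: "('n::finite \<Rightarrow> nat) \<Rightarrow> 'a^'n^'n \<Rightarrow> 'a mat" where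
  "to_mat h A = Matrix.mat CARD('n) CARD('n) (\<lambda>(i, j). A $ inv_into UNIV h i $ inv_into UNIV h j)"

definition of_vec :: "('n \<Rightarrow> nat) \<Rightarrow> 'a Matrix.vec \<Rightarrow> 'a^'n" where
  "of_vec h v = (\<chi> i. Matrix.vec_index v (h i))"

context
  fixes h :: "'n::finite \<Rightarrow> nat"
  assumes h: "bij_betw h UNIV {0..<CARD('n)}"
begin

private lemma h_less: "h i < CARD('n)"
  using h bij_betwE by fastforce

private lemma sum_reindex: "(\<Sum>j<CARD('n). f j) = (\<Sum>l\<in>UNIV. f (h l))"
  using sum.reindex_bij_betw[OF h, of f] by (simp add: atLeast0LessThan)

lemma of_mat_to_mat: "of_mat h (to_mat h A) = A"
  using h by (simp add: of_mat_def to_mat_def Finite_Cartesian_Product.vec_eq_iff h_less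
      bij_betw_def)

lemma to_mat_carrier: "to_mat h A \<in> carrier_mat CARD('n) CARD('n)"
  by (simp add: to_mat_def)

lemma of_mat_mult:
  fixes B C :: "'a::semiring_1 mat"
  assumes "B \<in> carrier_mat CARD('n) CARD('n)" "C \<in> carrier_mat CARD('n) CARD('n)"
  shows "of_mat h (B * C) = of_mat h B ** of_mat h C"
  using assms by (simp add: of_mat_def matrix_matrix_mult_def Finite_Cartesian_Product.vec_eq_iff
      h_less scalar_prod_def sum_reindex atLeast0LessThan)

lemma of_mat_one: "of_mat h (1\<^sub>m CARD('n)) = (mat 1 :: 'a::zero_neq_one^'n^'n)"
  using h by (auto simp: of_mat_def Finite_Cartesian_Product.vec_eq_iff h_less
      Finite_Cartesian_Product.mat_def bij_betw_def inj_eq)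

lemma of_vec_mult:
  fixes B :: "'a::semiring_1 mat"
  assumes "B \<in> carrier_mat CARD('n) CARD('n)" "v \<in> carrier_vec CARD('n)"
  shows "of_vec h (B *\<^sub>v v) = of_mat h B *v of_vec h v"
  using assms by (simp add: of_mat_def of_vec_def matrix_vector_mult_def
      Finite_Cartesian_Product.vec_eq_iff h_less scalar_prod_def sum_reindex atLeast0LessThan)

lemma of_vec_smult:
  "v \<in> carrier_vec CARD('n) \<Longrightarrow> of_vec h (e \<cdot>\<^sub>v v) = e *s of_vec h v"
  by (simp add: of_vec_def vector_scalar_mult_def Finite_Cartesian_Product.vec_eq_iff h_less)

lemma of_vec_eq_0_iff:
  assumes "v \<in> carrier_vec CARD('n)"
  shows "of_vec h v = 0 \<longleftrightarrow> v = 0\<^sub>v CARD('n)"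
proof
  assume z: "of_vec h v = 0"
  show "v = 0\<^sub>v CARD('n)"
  proof (rule eq_vecI)
    fix k assume "k < dim_vec (0\<^sub>v CARD('n) :: 'a Matrix.vec)"
    then have "k \<in> range h"
      using h by (simp add: bij_betw_def)
    then obtain l where "k = h l"
      by blast
    moreover have "of_vec h v $ l = 0"
      using z by simp
    ultimately show "Matrix.vec_index v k = Matrix.vec_index (0\<^sub>v CARD('n)) k"
      using h_less[of l] by (simp add: of_vec_def)
  qed (use assms in simp)
qed (simp add: of_vec_def Finite_Cartesian_Product.vec_eq_iff h_less)

lemma of_mat_eigenvalue:
  fixes A :: "'a::field mat"
  assumes A: "A \<in> carrier_mat CARD('n) CARD('n)" and "eigenvalue A e"
  shows "\<exists>v. v \<noteq> 0 \<and> of_mat h A *v v = e *s v"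
proof -
  obtain v where "eigenvector A v e"
    using \<open>eigenvalue A e\<close> unfolding eigenvalue_def by blast
  then have v: "v \<in> carrier_vec CARD('n)" "v \<noteq> 0\<^sub>v CARD('n)" and Av: "A *\<^sub>v v = e \<cdot>\<^sub>v v"
    unfolding eigenvector_def using A by auto
  show ?thesis
  proof (intro exI conjI)
    show "of_vec h v \<noteq> 0"
      using of_vec_eq_0_iff[OF v(1)] v(2) by simp
    have "of_mat h A *v of_vec h v = of_vec h (A *\<^sub>v v)"
      by (rule of_vec_mult[OF A v(1), symmetric])
    also have "\<dots> = e *s of_vec h v"
      unfolding Av by (rule of_vec_smult[OF v(1)])
    finally show "of_mat h A *v of_vec h v = e *s of_vec h v" .
  qed
qed

end

lemma schur_triangularization_mat:
  fixes A :: "complex mat"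
  assumes A: "A \<in> carrier_mat n n"
  obtains B P Q
  where "similar_mat_wit A B P Q" "upper_triangular B" "\<And>i. i < n \<Longrightarrow> eigenvalue A (B $$ (i, i))"
proof -
  obtain es where es: "char_poly A = (\<Prod>a\<leftarrow>es. [:- a, 1:])"
    using char_poly_factorized[OF A] by blast
  obtain B P Q where "schur_decomposition A es = (B, P, Q)"
    by (cases "schur_decomposition A es") auto
  from schur_decomposition[OF A es this]
  have sim: "similar_mat_wit A B P Q" and upper: "upper_triangular B" and diag: "diag_mat B = es"
    by auto
  show thesis
  proof (rule that[OF sim upper])
    fix i assume "i < n"
    then have "B $$ (i, i) \<in> set es"
      using similar_mat_witD2[OF A sim] unfolding diag[symmetric] diag_mat_def by auto
    then have "poly (char_poly A) (B $$ (i, i)) = 0"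
      unfolding es by (simp add: poly_prod_list prod_list_zero_iff)
    then show "eigenvalue A (B $$ (i, i))"
      using eigenvalue_root_char_poly[OF A] by simp
  qed
qed

lemma schur_triangularization:
  fixes A :: "complex^'n::finite^'n"
  obtains h :: "'n \<Rightarrow> nat" and P Q T
  where "inj h" "P ** Q = mat 1" "Q ** P = mat 1" "A = P ** T ** Q"
    "\<And>i j. h j < h i \<Longrightarrow> T $ i $ j = 0"
    "\<And>i. \<exists>v. v \<noteq> 0 \<and> A *v v = T $ i $ i *s v"
proof -
  obtain h :: "'n \<Rightarrow> nat" where h: "bij_betw h UNIV {0..<CARD('n)}"
    using ex_bij_betw_finite_nat[of "UNIV::'n set"] by auto
  have h_less: "h i < CARD('n)" for i
    using h bij_betwE by fastforce
  define A' where "A' = to_mat h A"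
  have A': "A' \<in> carrier_mat CARD('n) CARD('n)"
    unfolding A'_def by (rule to_mat_carrier[OF h])
  obtain B P Q where sim: "similar_mat_wit A' B P Q" and upper: "upper_triangular B"
    and eigen: "\<And>i. i < CARD('n) \<Longrightarrow> eigenvalue A' (B $$ (i, i))"
    by (rule schur_triangularization_mat[OF A']) blast
  from similar_mat_witD2[OF A' sim]
  have B: "B \<in> carrier_mat CARD('n) CARD('n)" and P: "P \<in> carrier_mat CARD('n) CARD('n)"
    and Q: "Q \<in> carrier_mat CARD('n) CARD('n)" and PQ: "P * Q = 1\<^sub>m CARD('n)"
    and QP: "Q * P = 1\<^sub>m CARD('n)" and A'B: "A' = P * B * Q"
    by auto
  have A: "A = of_mat h A'"
    unfolding A'_def by (simp add: of_mat_to_mat[OF h])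
  show thesis
  proof (rule that)
    show "inj h"
      using h bij_betw_def by blast
    show "of_mat h P ** of_mat h Q = mat 1"
      unfolding of_mat_mult[OF h P Q, symmetric] PQ by (rule of_mat_one[OF h])
    show "of_mat h Q ** of_mat h P = mat 1"
      unfolding of_mat_mult[OF h Q P, symmetric] QP by (rule of_mat_one[OF h])
    show "A = of_mat h P ** of_mat h B ** of_mat h Q"
      unfolding A A'B of_mat_mult[OF h mult_carrier_mat[OF P B] Q] of_mat_mult[OF h P B] ..
    show "of_mat h B $ i $ j = 0" if "h j < h i" for i j
      using that upper B h_less by (auto simp: of_mat_def)
    show "\<exists>v. v \<noteq> 0 \<and> A *v v = of_mat h B $ i $ i *s v" for i
      using of_mat_eigenvalue[OF h A' eigen[OF h_less]] unfolding A by (simp add: of_mat_def)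
  qed
qed

definition entry_norm_sum :: "'a::real_normed_vector^'n^'m \<Rightarrow> real" where
  "entry_norm_sum A = (\<Sum>i\<in>UNIV. \<Sum>j\<in>UNIV. norm (A $ i $ j))"

lemma entry_norm_sum_nonneg: "entry_norm_sum A \<ge> 0"
  unfolding entry_norm_sum_def by (intro sum_nonneg) auto

lemma norm_matrix_vector_mult_le:
  "norm ((A :: 'a::real_normed_field^'n::finite^'m::finite) *v y) \<le> entry_norm_sum A * norm y"
proof -
  have "norm (A *v y) \<le> (\<Sum>i\<in>UNIV. norm ((A *v y) $ i))"
    unfolding norm_vec_def by (rule L2_set_le_sum) auto
  also have "\<dots> \<le> (\<Sum>i\<in>UNIV. (\<Sum>j\<in>UNIV. norm (A $ i $ j)) * norm y)"
  proof (rule sum_mono)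
    fix i
    have "norm ((A *v y) $ i) \<le> (\<Sum>j\<in>UNIV. norm (A $ i $ j * y $ j))"
      unfolding matrix_vector_mult_def by (simp add: norm_sum)
    also have "\<dots> \<le> (\<Sum>j\<in>UNIV. norm (A $ i $ j) * norm y)"
      by (intro sum_mono)
        (auto simp: norm_mult intro!: mult_left_mono Finite_Cartesian_Product.norm_nth_le)
    finally show "norm ((A *v y) $ i) \<le> (\<Sum>j\<in>UNIV. norm (A $ i $ j)) * norm y"
      by (simp add: sum_distrib_right)
  qed
  also have "\<dots> = entry_norm_sum A * norm y"
    unfolding entry_norm_sum_def by (simp add: sum_distrib_right)
  finally show ?thesis .
qed

definition diag_matrix :: "('n \<Rightarrow> 'a::zero) \<Rightarrow> 'a^'n^'n" where
  "diag_matrix d = (\<chi> i j. if i = j then d i else 0)"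

lemma diag_matrix_mult:
  "diag_matrix d ** diag_matrix e = diag_matrix (\<lambda>i. d i * e i :: 'a::semiring_1)"
  by (simp add: diag_matrix_def matrix_matrix_mult_def Finite_Cartesian_Product.vec_eq_iff if_distrib[of "\<lambda>x. x * _"]
      sum.delta cong: if_cong)

lemma diag_matrix_one: "diag_matrix (\<lambda>_. 1) = (mat 1 :: 'a::zero_neq_one^'n^'n)"
  by (simp add: diag_matrix_def Finite_Cartesian_Product.mat_def)

lemma diag_matrix_conj_nth:
  "(diag_matrix d ** A ** diag_matrix e) $ i $ j = d i * A $ i $ j * (e j :: 'a::semiring_1)"
  by (simp add: diag_matrix_def matrix_matrix_mult_def if_distrib[of "\<lambda>x. x * _"]
      if_distrib[of "\<lambda>x. _ * x"] sum.delta sum.delta' cong: if_cong)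

lemma inner_mult_self_complex: "inner a (t * a) = Re t * (norm a)^2" for a t :: complex
  by (simp only: cmod_power2 inner_complex_def) (simp add: power2_eq_square algebra_simps)

lemma inner_matrix_vector_mult_complex:
  "inner y (A *v y) = (\<Sum>i\<in>UNIV. \<Sum>j\<in>UNIV. inner (y $ i) (A $ i $ j * y $ j))"
  for A :: "complex^'n::finite^'n"
  by (simp add: inner_vec_def matrix_vector_mult_def inner_sum_right)

lemma scaled_triangular_inner_nth_le:
  fixes T :: "complex^'n::finite^'n" and y :: "complex^'n" and h :: "'n \<Rightarrow> nat"
  assumes "inj h" and upper: "\<And>i j. h j < h i \<Longrightarrow> T $ i $ j = 0"
    and diag: "\<And>i. Re (T $ i $ i) \<le> - \<alpha>" and \<epsilon>: "0 < \<epsilon>" "\<epsilon> \<le> 1"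
  shows "inner (y $ i) (T $ i $ j * of_real (\<epsilon> ^ h j / \<epsilon> ^ h i) * y $ j)
    \<le> (if i = j then - \<alpha> * (norm (y $ i))^2 else 0) + \<epsilon> * norm (T $ i $ j) * (norm y)^2"
proof (cases "h i < h j")
  case True
  define q where "q = \<epsilon> ^ h j / \<epsilon> ^ h i"
  have "q = \<epsilon> ^ (h j - h i)"
    unfolding q_def using \<epsilon> True by (simp add: power_diff)
  then have q: "0 \<le> q" "q \<le> \<epsilon>"
    using power_decreasing[of 1 "h j - h i" \<epsilon>] \<epsilon> True by auto
  have "inner (y $ i) (T $ i $ j * of_real q * y $ j) \<le> norm (y $ i) * norm (T $ i $ j * of_real q * y $ j)"
    by (rule norm_cauchy_schwarz)
  also have "\<dots> = norm (y $ i) * (norm (T $ i $ j) * q * norm (y $ j))"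
    using q by (simp add: norm_mult)
  also have "\<dots> \<le> norm y * (norm (T $ i $ j) * \<epsilon> * norm y)"
    using q Finite_Cartesian_Product.norm_nth_le[of y i] Finite_Cartesian_Product.norm_nth_le[of y j]
    by (intro mult_mono) auto
  finally have "inner (y $ i) (T $ i $ j * of_real q * y $ j) \<le> \<epsilon> * norm (T $ i $ j) * (norm y)^2"
    by (simp add: power2_eq_square algebra_simps)
  moreover have "i \<noteq> j"
    using True by auto
  ultimately show ?thesis
    unfolding q_def[symmetric] by simp
next
  case False
  consider "i = j" | "h j < h i"
    using False \<open>inj h\<close> by (metis inj_eq linorder_neqE_nat)
  then show ?thesis
  proof cases
    case 1
    have "inner (y $ j) (T $ j $ j * y $ j) \<le> - \<alpha> * (norm (y $ j))^2"
      unfolding inner_mult_self_complex using diag[of j] by (intro mult_right_mono) auto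
    moreover have "0 \<le> \<epsilon> * norm (T $ j $ j) * (norm y)^2"
      using \<epsilon> by simp
    ultimately have "inner (y $ j) (T $ j $ j * y $ j)
        \<le> - \<alpha> * (norm (y $ j))^2 + \<epsilon> * norm (T $ j $ j) * (norm y)^2"
      by linarith
    then show ?thesis
      using 1 \<epsilon> by simp
  next
    case 2
    then have "i \<noteq> j"
      by auto
    then show ?thesis
      using upper[OF 2] \<epsilon> by simp
  qed
qed

text \<open>Conjugating an upper triangular matrix by \<open>diag (\<epsilon>^h i)\<close> multiplies the entry \<open>(i, j)\<close>
  by \<open>\<epsilon>^(h j - h i)\<close>, so for small \<open>\<epsilon>\<close> the strictly upper part cannot spoil the negative
  diagonal.\<close>
lemma scaled_triangular_inner_le:
  fixes T :: "complex^'n::finite^'n" and h :: "'n \<Rightarrow> nat"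
  assumes "inj h" and upper: "\<And>i j. h j < h i \<Longrightarrow> T $ i $ j = 0"
    and diag: "\<And>i. Re (T $ i $ i) \<le> - \<alpha>" and \<epsilon>: "0 < \<epsilon>" "\<epsilon> \<le> 1"
  defines "D \<equiv> diag_matrix (\<lambda>i. complex_of_real (\<epsilon> ^ h i))"
    and "D' \<equiv> diag_matrix (\<lambda>i. complex_of_real ((1 / \<epsilon>) ^ h i))"
  shows "inner y ((D' ** T ** D) *v y) \<le> (\<epsilon> * entry_norm_sum T - \<alpha>) * (norm y)^2"
proof -
  have nth: "(D' ** T ** D) $ i $ j = T $ i $ j * of_real (\<epsilon> ^ h j / \<epsilon> ^ h i)" for i j
  proof -
    have "(1 / \<epsilon>) ^ h i * \<epsilon> ^ h j = \<epsilon> ^ h j / \<epsilon> ^ h i"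
      by (simp add: power_one_over)
    then show ?thesis
      unfolding D_def D'_def diag_matrix_conj_nth by (metis mult.commute mult.left_commute of_real_mult)
  qed
  have "inner y ((D' ** T ** D) *v y) =
      (\<Sum>i\<in>UNIV. \<Sum>j\<in>UNIV. inner (y $ i) (T $ i $ j * of_real (\<epsilon> ^ h j / \<epsilon> ^ h i) * y $ j))"
    by (simp add: inner_matrix_vector_mult_complex nth)
  also have "\<dots> \<le> (\<Sum>i\<in>UNIV. \<Sum>j\<in>UNIV. (if i = j then - \<alpha> * (norm (y $ i))^2 else 0)
      + \<epsilon> * norm (T $ i $ j) * (norm y)^2)"
    by (intro sum_mono scaled_triangular_inner_nth_le[OF assms(1) upper diag \<epsilon>])
  also have "\<dots> = - \<alpha> * (\<Sum>i\<in>UNIV. (norm (y $ i))^2) + \<epsilon> * entry_norm_sum T * (norm y)^2"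
    unfolding entry_norm_sum_def sum.distrib sum_distrib_left sum_distrib_right
    by (simp add: if_distrib cong: if_cong)
  also have "(\<Sum>i\<in>UNIV. (norm (y $ i))^2) = (norm y)^2"
    by (simp add: power2_norm_eq_inner inner_vec_def)
  finally show ?thesis
    by (simp add: algebra_simps)
qed

lemma triangular_scaling_dissipative:
  fixes T :: "complex^'n::finite^'n" and h :: "'n \<Rightarrow> nat"
  assumes "inj h" and upper: "\<And>i j. h j < h i \<Longrightarrow> T $ i $ j = 0"
    and diag: "\<And>i. Re (T $ i $ i) \<le> - \<alpha>" and "\<alpha> > 0"
  obtains D D' :: "complex^'n^'n"
  where "D ** D' = mat 1" "\<And>y. inner y ((D' ** T ** D) *v y) \<le> - (\<alpha> / 2) * (norm y)^2"
proof -
  define C where "C = entry_norm_sum T"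
  have "C \<ge> 0"
    unfolding C_def by (rule entry_norm_sum_nonneg)
  define \<epsilon> where "\<epsilon> = min 1 (\<alpha> / (2 * (C + 1)))"
  have \<epsilon>: "0 < \<epsilon>" "\<epsilon> \<le> 1"
    unfolding \<epsilon>_def using \<open>\<alpha> > 0\<close> \<open>C \<ge> 0\<close> by auto
  have "\<epsilon> * C \<le> \<alpha> / (2 * (C + 1)) * C"
    unfolding \<epsilon>_def using \<open>C \<ge> 0\<close> by (intro mult_right_mono) auto
  also have "\<dots> \<le> \<alpha> / 2"
    using \<open>\<alpha> > 0\<close> \<open>C \<ge> 0\<close> by (simp add: field_simps)
  finally have "\<epsilon> * C - \<alpha> \<le> - (\<alpha> / 2)"
    by simp
  show thesis
  proof (rule that)
    have "complex_of_real (\<epsilon> ^ k) * complex_of_real ((1 / \<epsilon>) ^ k) = 1" for k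
      using \<epsilon> by (simp add: power_one_over)
    then show "diag_matrix (\<lambda>i. complex_of_real (\<epsilon> ^ h i))
        ** diag_matrix (\<lambda>i. complex_of_real ((1 / \<epsilon>) ^ h i)) = mat 1"
      unfolding diag_matrix_mult by (simp add: diag_matrix_one)
    show "inner y ((diag_matrix (\<lambda>i. complex_of_real ((1 / \<epsilon>) ^ h i)) ** T
        ** diag_matrix (\<lambda>i. complex_of_real (\<epsilon> ^ h i))) *v y) \<le> - (\<alpha> / 2) * (norm y)^2" for y
      using scaled_triangular_inner_le[OF assms(1) upper diag \<epsilon>, of y]
        mult_right_mono[OF \<open>\<epsilon> * C - \<alpha> \<le> - (\<alpha> / 2)\<close>, of "(norm y)^2"]
      unfolding C_def by simp
  qed
qed

definition complex_mat :: "real^'n^'m \<Rightarrow> complex^'n^'m" where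
  "complex_mat A = (\<chi> i j. complex_of_real (A $ i $ j))"

lemma hurwitz_triangularization:
  fixes M :: "real^'n::finite^'n"
  assumes "hurwitz M"
  obtains h :: "'n \<Rightarrow> nat" and P Q T :: "complex^'n^'n" and \<alpha>
  where "inj h" "P ** Q = mat 1" "Q ** P = mat 1" "complex_mat M = P ** T ** Q"
    "\<And>i j. h j < h i \<Longrightarrow> T $ i $ j = 0" "\<alpha> > 0" "\<And>i. Re (T $ i $ i) \<le> - \<alpha>"
proof -
  obtain h :: "'n \<Rightarrow> nat" and P Q T :: "complex^'n^'n"
    where schur: "inj h" "P ** Q = mat 1" "Q ** P = mat 1" "complex_mat M = P ** T ** Q"
      "\<And>i j. h j < h i \<Longrightarrow> T $ i $ j = 0"
      and eigen: "\<And>i. \<exists>v. v \<noteq> 0 \<and> complex_mat M *v v = T $ i $ i *s v"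
    by (rule schur_triangularization[of "complex_mat M"]) blast
  have "\<forall>\<mu> v. v \<noteq> 0 \<and> complex_mat M *v v = \<mu> *s v \<longrightarrow> Re \<mu> < 0"
    using assms unfolding hurwitz_def complex_mat_def .
  then have neg: "Re (T $ i $ i) < 0" for i
    using eigen[of i] by blast
  define \<alpha> where "\<alpha> = Min (range (\<lambda>i. - Re (T $ i $ i)))"
  show thesis
  proof (rule that[OF schur])
    show "\<alpha> > 0"
      unfolding \<alpha>_def using neg by (simp add: Min_gr_iff)
    have "\<alpha> \<le> - Re (T $ i $ i)" for i
      unfolding \<alpha>_def by (rule Min_le) auto
    then show "Re (T $ i $ i) \<le> - \<alpha>" for i
      by (simp add: le_minus_iff)
  qed
qed

lemma hurwitz_dissipative_coordinates:
  fixes M :: "real^'n::finite^'n"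
  assumes "hurwitz M"
  obtains S S' :: "complex^'n^'n" and \<alpha>
  where "\<alpha> > 0" "\<And>w. S *v (S' *v w) = w"
    "\<And>y. inner y (S' *v (complex_mat M *v (S *v y))) \<le> - \<alpha> * (norm y)^2"
proof -
  obtain h :: "'n \<Rightarrow> nat" and P Q T :: "complex^'n^'n" and \<alpha>
    where h: "inj h" and PQ: "P ** Q = mat 1" and QP: "Q ** P = mat 1"
      and MT: "complex_mat M = P ** T ** Q" and upper: "\<And>i j. h j < h i \<Longrightarrow> T $ i $ j = 0"
      and "\<alpha> > 0" and diag: "\<And>i. Re (T $ i $ i) \<le> - \<alpha>"
    using hurwitz_triangularization[OF assms] by metis
  obtain D D' :: "complex^'n^'n" where DD': "D ** D' = mat 1"
    and dissipative: "\<And>y. inner y ((D' ** T ** D) *v y) \<le> - (\<alpha> / 2) * (norm y)^2"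
    using triangular_scaling_dissipative[OF h upper diag \<open>\<alpha> > 0\<close>] by metis
  show thesis
  proof (rule that[of "\<alpha> / 2" "P ** D" "D' ** Q"])
    show "\<alpha> / 2 > 0"
      using \<open>\<alpha> > 0\<close> by simp
    have "(P ** D) ** (D' ** Q) = P ** (D ** D') ** Q"
      by (simp add: matrix_mul_assoc)
    then have "(P ** D) ** (D' ** Q) = mat 1"
      using DD' PQ by (simp add: matrix_mul_rid)
    then show "(P ** D) *v ((D' ** Q) *v w) = w" for w
      by (metis matrix_vector_mul_assoc matrix_vector_mul_lid)
    have "(D' ** Q) ** complex_mat M ** (P ** D) = D' ** (Q ** P) ** T ** (Q ** P) ** D"
      unfolding MT by (simp add: matrix_mul_assoc)
    then have "(D' ** Q) ** complex_mat M ** (P ** D) = D' ** T ** D"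
      using QP by (simp add: matrix_mul_rid matrix_mul_lid)
    then show "inner y ((D' ** Q) *v (complex_mat M *v ((P ** D) *v y)))
        \<le> - (\<alpha> / 2) * (norm y)^2" for y
      using dissipative[of y] by (metis matrix_vector_mul_assoc)
  qed
qed

definition complex_vec :: "real^'n \<Rightarrow> complex^'n" where
  "complex_vec x = (\<chi> i. complex_of_real (x $ i))"

lemma complex_vec_add: "complex_vec (x + y) = complex_vec x + complex_vec y"
  by (simp add: complex_vec_def Finite_Cartesian_Product.vec_eq_iff)

lemma complex_vec_scaleR: "complex_vec (r *\<^sub>R x) = r *\<^sub>R complex_vec x"
  by (simp add: complex_vec_def Finite_Cartesian_Product.vec_eq_iff
      scaleR_conv_of_real[where 'a = complex])

lemma norm_complex_vec: "norm (complex_vec x) = norm (x :: real^'n::finite)"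
  by (simp add: complex_vec_def norm_vec_def)

lemma complex_mat_mult_complex_vec: "complex_mat A *v complex_vec x = complex_vec (A *v x)"
  by (simp add: complex_mat_def complex_vec_def matrix_vector_mult_def
      Finite_Cartesian_Product.vec_eq_iff)

lemma matrix_vector_mult_scaleR_complex:
  "(A :: complex^'n::finite^'m) *v (r *\<^sub>R y) = r *\<^sub>R (A *v y)"
  by (simp add: matrix_vector_mult_def Finite_Cartesian_Product.vec_eq_iff
      scaleR_conv_of_real[where 'a = complex] sum_distrib_left algebra_simps)

text \<open>\<open>V z = \<parallel>L z\<parallel>\<^sup>2\<close> is a Lyapunov function for \<open>z' = A z\<close> with decay rate \<open>2 r\<close>,
  comparable to \<open>\<parallel>z\<parallel>\<^sup>2\<close> with constants \<open>1\<close> and \<open>b\<close>.\<close>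
definition quadratic_lyapunov :: "real^'n^'n \<Rightarrow> (real^'n \<Rightarrow> 'b::real_inner) \<Rightarrow> real \<Rightarrow> real \<Rightarrow> bool"
  where "quadratic_lyapunov A L b r \<longleftrightarrow> bounded_linear L \<and>
    (\<forall>z. norm z \<le> norm (L z) \<and> (norm (L z))^2 \<le> b * (norm z)^2) \<and>
    (\<forall>z. inner (L z) (L (A *v z)) \<le> - r * (norm (L z))^2)"

lemma quadratic_lyapunov_mono:
  assumes "quadratic_lyapunov A L b r" "b \<le> b'" "r' \<le> r"
  shows "quadratic_lyapunov A L b' r'"
proof -
  have "b * (norm z)^2 \<le> b' * (norm z)^2" "- r * (norm (L z))^2 \<le> - r' * (norm (L z))^2" for z
    using assms(2,3) by (auto intro: mult_right_mono)
  then show ?thesis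
    using assms(1) unfolding quadratic_lyapunov_def by (meson order_trans)
qed

lemma inverse_coordinates_norm_bounds:
  fixes S S' :: "complex^'n::finite^'n"
  assumes inverse: "\<And>w. S *v (S' *v w) = w"
  defines "s \<equiv> entry_norm_sum S + 1"
  shows "bounded_linear (\<lambda>x. s *\<^sub>R (S' *v complex_vec x))"
    and "norm x \<le> norm (s *\<^sub>R (S' *v complex_vec x))"
    and "(norm (s *\<^sub>R (S' *v complex_vec x)))^2 \<le> (max 1 (s * entry_norm_sum S'))^2 * (norm x)^2"
proof -
  have "s > 0"
    unfolding s_def using entry_norm_sum_nonneg[of S] by linarith
  have upper: "norm (s *\<^sub>R (S' *v complex_vec x)) \<le> norm x * (s * entry_norm_sum S')" for x
    using norm_matrix_vector_mult_le[of S' "complex_vec x"] \<open>s > 0\<close>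
    by (simp add: norm_complex_vec algebra_simps)
  show "bounded_linear (\<lambda>x. s *\<^sub>R (S' *v complex_vec x))"
    by (rule bounded_linear_intro[OF _ _ upper])
      (simp_all add: complex_vec_add complex_vec_scaleR matrix_vector_right_distrib
        matrix_vector_mult_scaleR_complex scaleR_add_right)
  have "norm x = norm (S *v (S' *v complex_vec x))"
    by (simp add: inverse norm_complex_vec)
  also have "\<dots> \<le> entry_norm_sum S * norm (S' *v complex_vec x)"
    by (rule norm_matrix_vector_mult_le)
  also have "\<dots> \<le> norm (s *\<^sub>R (S' *v complex_vec x))"
    unfolding s_def using \<open>s > 0\<close> s_def by (simp add: mult_right_mono)
  finally show "norm x \<le> norm (s *\<^sub>R (S' *v complex_vec x))" .
  have "norm (s *\<^sub>R (S' *v complex_vec x)) \<le> max 1 (s * entry_norm_sum S') * norm x"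
    using upper[of x] by (smt (verit) mult.commute mult_right_mono norm_ge_zero)
  then show "(norm (s *\<^sub>R (S' *v complex_vec x)))^2 \<le> (max 1 (s * entry_norm_sum S'))^2 * (norm x)^2"
    by (metis norm_ge_zero power_mono power_mult_distrib)
qed

lemma complex_mat_add_scaleR_mult:
  "complex_mat (N + g *\<^sub>R M) *v w = complex_mat N *v w + g *\<^sub>R (complex_mat M *v w)"
  by (simp add: complex_mat_def matrix_vector_mult_def Finite_Cartesian_Product.vec_eq_iff
      scaleR_conv_of_real[where 'a = complex] sum.distrib sum_distrib_left algebra_simps)

lemma coordinates_quadratic_lyapunov:
  fixes S S' :: "complex^'n::finite^'n" and A :: "real^'n^'n"
  assumes inverse: "\<And>w. S *v (S' *v w) = w"
    and dissipative: "\<And>y. inner y (S' *v (complex_mat A *v (S *v y))) \<le> - r * (norm y)^2"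
  defines "s \<equiv> entry_norm_sum S + 1"
  shows "quadratic_lyapunov A (\<lambda>x. s *\<^sub>R (S' *v complex_vec x)) ((max 1 (s * entry_norm_sum S'))^2) r"
proof -
  have "inner (s *\<^sub>R (S' *v complex_vec x)) (s *\<^sub>R (S' *v complex_vec (A *v x)))
      \<le> - r * (norm (s *\<^sub>R (S' *v complex_vec x)))^2" for x
  proof -
    define y where "y = S' *v complex_vec x"
    have "complex_vec (A *v x) = complex_mat A *v (S *v y)"
      unfolding y_def inverse complex_mat_mult_complex_vec ..
    then have "inner (s *\<^sub>R y) (s *\<^sub>R (S' *v complex_vec (A *v x)))
        = s^2 * inner y (S' *v (complex_mat A *v (S *v y)))"
      by (simp add: power2_eq_square)
    also have "\<dots> \<le> s^2 * (- r * (norm y)^2)"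
      using dissipative by (rule mult_left_mono) simp
    also have "\<dots> = - r * (norm (s *\<^sub>R y))^2"
      by (simp add: power_mult_distrib)
    finally show ?thesis
      unfolding y_def .
  qed
  with inverse_coordinates_norm_bounds[OF inverse] show ?thesis
    unfolding quadratic_lyapunov_def s_def by blast
qed

lemma dissipative_plus_bounded_inner_le:
  fixes S S' :: "complex^'n::finite^'n" and M N :: "real^'n^'n"
  assumes dissipative: "\<And>y. inner y (S' *v (complex_mat M *v (S *v y))) \<le> - \<alpha> * (norm y)^2"
    and "g \<ge> 0"
  defines "K \<equiv> entry_norm_sum S' * entry_norm_sum (complex_mat N) * entry_norm_sum S"
  shows "inner y (S' *v (complex_mat (N + g *\<^sub>R M) *v (S *v y))) \<le> - (g * \<alpha> - K) * (norm y)^2"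
proof -
  have "inner y (S' *v (complex_mat N *v (S *v y))) \<le> norm y * norm (S' *v (complex_mat N *v (S *v y)))"
    by (rule norm_cauchy_schwarz)
  also have "\<dots> \<le> norm y * (entry_norm_sum S' * (entry_norm_sum (complex_mat N)
      * (entry_norm_sum S * norm y)))"
    by (intro mult_left_mono order.trans[OF norm_matrix_vector_mult_le] entry_norm_sum_nonneg
        norm_ge_zero norm_matrix_vector_mult_le)
  finally have "inner y (S' *v (complex_mat N *v (S *v y))) \<le> K * (norm y)^2"
    unfolding K_def by (simp add: power2_eq_square algebra_simps)
  moreover have "g * inner y (S' *v (complex_mat M *v (S *v y))) \<le> g * (- \<alpha> * (norm y)^2)"
    using dissipative \<open>g \<ge> 0\<close> by (rule mult_left_mono)
  ultimately show ?thesis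
    by (simp add: complex_mat_add_scaleR_mult matrix_vector_right_distrib
        matrix_vector_mult_scaleR_complex inner_add_right algebra_simps)
qed

lemma hurwitz_high_gain_lyapunov:
  fixes M N :: "real^'n::finite^'n"
  assumes "hurwitz M"
  obtains L :: "real^'n \<Rightarrow> complex^'n" and b K \<alpha>
  where "\<alpha> > 0" "\<And>g. g \<ge> 0 \<Longrightarrow> quadratic_lyapunov (N + g *\<^sub>R M) L b (g * \<alpha> - K)"
proof -
  obtain S S' :: "complex^'n^'n" and \<alpha> where "\<alpha> > 0" and inverse: "\<And>w. S *v (S' *v w) = w"
    and dissipative: "\<And>y. inner y (S' *v (complex_mat M *v (S *v y))) \<le> - \<alpha> * (norm y)^2"
    using hurwitz_dissipative_coordinates[OF assms] by metis
  show thesis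
    using \<open>\<alpha> > 0\<close> coordinates_quadratic_lyapunov[OF inverse
        dissipative_plus_bounded_inner_le[OF dissipative, where N = N]]
    by (rule that)
qed

lemma hurwitz_family_high_gain_lyapunov:
  fixes M :: "nat \<Rightarrow> real^'n::finite^'n" and N :: "real^'n^'n"
  assumes "finite P" "\<forall>i\<in>P. hurwitz (M i)"
  shows "\<exists>(L :: nat \<Rightarrow> real^'n \<Rightarrow> complex^'n) B K \<alpha>. B \<ge> 1 \<and> K \<ge> 0 \<and> \<alpha> > 0 \<and>
    (\<forall>g\<ge>0. \<forall>i\<in>P. quadratic_lyapunov (N + g *\<^sub>R M i) (L i) B (g * \<alpha> - K))"
  using assms
proof (induction P rule: finite_induct)
  case empty
  have "(1::real) \<ge> 1 \<and> (0::real) \<ge> 0 \<and> (1::real) > 0"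
    by simp
  then show ?case
    by blast
next
  case (insert p P)
  then obtain L :: "nat \<Rightarrow> real^'n \<Rightarrow> complex^'n" and B K \<alpha> where "B \<ge> 1" "K \<ge> 0" "\<alpha> > 0"
    and family: "\<forall>g\<ge>0. \<forall>i\<in>P. quadratic_lyapunov (N + g *\<^sub>R M i) (L i) B (g * \<alpha> - K)"
    by auto
  obtain Lp :: "real^'n \<Rightarrow> complex^'n" and bp Kp \<alpha>p where "\<alpha>p > 0"
    and mode: "\<And>g. g \<ge> 0 \<Longrightarrow> quadratic_lyapunov (N + g *\<^sub>R M p) Lp bp (g * \<alpha>p - Kp)"
    using hurwitz_high_gain_lyapunov[of "M p" N] insert.prems by (metis insertI1)
  have rate: "g * min \<alpha> \<alpha>p - max K Kp \<le> g * \<alpha> - K" "g * min \<alpha> \<alpha>p - max K Kp \<le> g * \<alpha>p - Kp"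
    if "g \<ge> 0" for g
    using that mult_left_mono[of "min \<alpha> \<alpha>p" \<alpha> g] mult_left_mono[of "min \<alpha> \<alpha>p" \<alpha>p g] by auto
  have "quadratic_lyapunov (N + g *\<^sub>R M i) ((L(p := Lp)) i) (max B bp) (g * min \<alpha> \<alpha>p - max K Kp)"
    if "g \<ge> 0" "i \<in> insert p P" for g i
  proof (cases "i = p")
    case True
    then show ?thesis
      using quadratic_lyapunov_mono[OF mode[OF \<open>g \<ge> 0\<close>] max.cobounded2 rate(2)[OF \<open>g \<ge> 0\<close>]] by simp
  next
    case False
    then have "i \<in> P"
      using that(2) by simp
    then show ?thesis
      using quadratic_lyapunov_mono[OF family[rule_format, OF \<open>g \<ge> 0\<close> \<open>i \<in> P\<close>] max.cobounded1
          rate(1)[OF \<open>g \<ge> 0\<close>]] False by simp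
  qed
  then show ?case
    using \<open>B \<ge> 1\<close> \<open>K \<ge> 0\<close> \<open>\<alpha> > 0\<close> \<open>\<alpha>p > 0\<close>
    by (intro exI[of _ "L(p := Lp)"] exI[of _ "max B bp"] exI[of _ "max K Kp"] exI[of _ "min \<alpha> \<alpha>p"])
      auto
qed

lemma lyapunov_exponential_decay:
  fixes x :: "real \<Rightarrow> real^'n::finite" and L :: "real^'n \<Rightarrow> 'b::real_inner"
  assumes "s \<le> t" and cont: "continuous_on {s..t} x"
    and deriv: "\<And>u. s < u \<Longrightarrow> u < t \<Longrightarrow> (x has_vector_derivative A *v x u) (at u)"
    and L: "bounded_linear L" and dissipative: "\<And>z. inner (L z) (L (A *v z)) \<le> - r * (norm (L z))^2"
  shows "(norm (L (x t)))^2 \<le> exp (- 2 * r * (t - s)) * (norm (L (x s)))^2"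
proof -
  define V where "V u = exp (2 * r * u) * inner (L (x u)) (L (x u))" for u
  have "V t \<le> V s"
  proof (rule DERIV_nonpos_imp_decreasing_open[OF \<open>s \<le> t\<close>])
    show "continuous_on {s..t} V"
      unfolding V_def by (intro continuous_intros bounded_linear.continuous_on[OF L cont])
    fix u assume "s < u" "u < t"
    have Lx: "((\<lambda>u. L (x u)) has_vector_derivative L (A *v x u)) (at u)"
      using bounded_linear.has_vector_derivative[OF L deriv[OF \<open>s < u\<close> \<open>u < t\<close>]] .
    have "((\<lambda>u. inner (L (x u)) (L (x u))) has_real_derivative 2 * inner (L (x u)) (L (A *v x u)))
        (at u)"
      using bounded_bilinear.has_vector_derivative[OF bounded_bilinear_inner Lx Lx]
      by (simp add: has_real_derivative_iff_has_vector_derivative inner_commute)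
    then have "(V has_real_derivative exp (2 * r * u) *
        (2 * r * inner (L (x u)) (L (x u)) + 2 * inner (L (x u)) (L (A *v x u)))) (at u)"
      unfolding V_def by (auto intro!: derivative_eq_intros simp: algebra_simps)
    moreover have "exp (2 * r * u) *
        (2 * r * inner (L (x u)) (L (x u)) + 2 * inner (L (x u)) (L (A *v x u))) \<le> 0"
      using dissipative[of "x u"] by (intro mult_nonneg_nonpos) (auto simp: power2_norm_eq_inner)
    ultimately show "\<exists>y. (V has_real_derivative y) (at u) \<and> y \<le> 0"
      by blast
  qed
  then have "exp (2 * r * t) * (norm (L (x t)))^2 \<le> exp (2 * r * s) * (norm (L (x s)))^2"
    unfolding V_def by (simp add: power2_norm_eq_inner)
  then show ?thesis
    by (simp add: exp_diff algebra_simps field_simps)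
qed

lemma quadratic_lyapunov_decay:
  fixes x :: "real \<Rightarrow> real^'n::finite" and L :: "real^'n \<Rightarrow> 'b::real_inner"
  assumes lyap: "quadratic_lyapunov A L b r" and "s \<le> t" and "continuous_on {s..t} x"
    and "\<And>u. s < u \<Longrightarrow> u < t \<Longrightarrow> (x has_vector_derivative A *v x u) (at u)"
  shows "(norm (x t))^2 \<le> b * exp (- 2 * r * (t - s)) * (norm (x s))^2"
proof -
  have L: "bounded_linear L"
    and norms: "\<And>z. norm z \<le> norm (L z)" "\<And>z. (norm (L z))^2 \<le> b * (norm z)^2"
    and dissipative: "\<And>z. inner (L z) (L (A *v z)) \<le> - r * (norm (L z))^2"
    using lyap unfolding quadratic_lyapunov_def by auto
  have "(norm (x t))^2 \<le> (norm (L (x t)))^2"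
    using norms(1) by (rule power_mono) simp
  also have "\<dots> \<le> exp (- 2 * r * (t - s)) * (norm (L (x s)))^2"
    using lyapunov_exponential_decay[OF assms(2-4) L dissipative] .
  also have "\<dots> \<le> exp (- 2 * r * (t - s)) * (b * (norm (x s))^2)"
    using norms(2) by (intro mult_left_mono) auto
  finally show ?thesis
    by (simp add: algebra_simps)
qed

lemma constant_between_disc_pts:
  fixes \<sigma> :: "real \<Rightarrow> nat"
  assumes "0 \<le> s" "s < t" and no_switch: "disc_pts \<sigma> \<inter> {s<..<t} = {}"
  obtains i where "\<And>u. s < u \<Longrightarrow> u < t \<Longrightarrow> \<sigma> u = i"
proof -
  have "isCont \<sigma> u" if "s < u" "u < t" for u
  proof -
    have "u \<notin> disc_pts \<sigma>"
      using no_switch that by auto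
    then have "continuous (at u within {0..}) \<sigma>"
      using that \<open>0 \<le> s\<close> unfolding disc_pts_def by auto
    moreover have "at u within {0..} = at u"
      by (rule at_within_interior) (use that \<open>0 \<le> s\<close> in simp)
    ultimately show ?thesis
      by simp
  qed
  then have "continuous_on {s<..<t} (\<lambda>u. real (\<sigma> u))"
    by (intro continuous_on_of_nat continuous_at_imp_continuous_on) auto
  moreover have "1 \<le> norm (real (\<sigma> v) - real (\<sigma> u))" if "\<sigma> v \<noteq> \<sigma> u" for u v
    using that by (cases "\<sigma> v < \<sigma> u") auto
  ultimately have "(\<lambda>u. real (\<sigma> u)) constant_on {s<..<t}"
    by (intro continuous_discrete_range_constant[OF connected_Ioo]) (auto intro!: exI[of _ 1])
  then show thesis
    using that unfolding constant_on_def by (metis greaterThanLessThan_iff of_nat_eq_iff)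
qed

lemma last_point_before:
  fixes D :: "real set"
  assumes "finite (D \<inter> {a<..<t})" "D \<inter> {a<..<t} \<noteq> {}"
  obtains s where "a < s" "s < t" "D \<inter> {s<..<t} = {}"
    "card (D \<inter> {a<..<t}) = Suc (card (D \<inter> {a<..<s}))"
proof
  define s where "s = Max (D \<inter> {a<..<t})"
  have "s \<in> D \<inter> {a<..<t}"
    unfolding s_def using assms by (rule Max_in)
  then show "a < s" "s < t"
    by auto
  have le_s: "u \<le> s" if "u \<in> D \<inter> {a<..<t}" for u
    unfolding s_def using assms(1) that by (rule Max_ge)
  then show "D \<inter> {s<..<t} = {}"
    using \<open>a < s\<close> by force
  have "D \<inter> {a<..<t} = insert s (D \<inter> {a<..<s})"
    using le_s \<open>s \<in> D \<inter> {a<..<t}\<close> by force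
  moreover have "finite (D \<inter> {a<..<s})"
    using assms(1) by (rule finite_subset[rotated]) (use \<open>s < t\<close> in auto)
  ultimately show "card (D \<inter> {a<..<t}) = Suc (card (D \<inter> {a<..<s}))"
    by simp
qed

lemma switched_solution_interval_bound:
  assumes sol: "switched_solution A \<sigma> x" and modes: "\<forall>u\<ge>0. \<sigma> u \<in> P"
    and lyap: "\<forall>i\<in>P. quadratic_lyapunov (A i) (L i) B r"
    and "0 \<le> s" "s \<le> t" and no_switch: "disc_pts \<sigma> \<inter> {s<..<t} = {}"
  shows "(norm (x t))^2 \<le> B * exp (- 2 * r * (t - s)) * (norm (x s))^2"
proof (cases "s = t")
  case True
  have "quadratic_lyapunov (A (\<sigma> s)) (L (\<sigma> s)) B r"
    using modes lyap \<open>0 \<le> s\<close> by auto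
  then have "norm (x s) \<le> norm (L (\<sigma> s) (x s))" "(norm (L (\<sigma> s) (x s)))^2 \<le> B * (norm (x s))^2"
    unfolding quadratic_lyapunov_def by auto
  moreover from this(1) have "(norm (x s))^2 \<le> (norm (L (\<sigma> s) (x s)))^2"
    by (rule power_mono) simp
  ultimately have "(norm (x s))^2 \<le> B * (norm (x s))^2"
    by linarith
  then show ?thesis
    using True by simp
next
  case False
  with \<open>s \<le> t\<close> have "s < t"
    by simp
  obtain i where const: "\<And>u. s < u \<Longrightarrow> u < t \<Longrightarrow> \<sigma> u = i"
    using constant_between_disc_pts[OF \<open>0 \<le> s\<close> \<open>s < t\<close> no_switch] by blast
  have "i \<in> P"
    using const[of "(s + t) / 2"] modes \<open>0 \<le> s\<close> \<open>s < t\<close> by force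
  show ?thesis
  proof (rule quadratic_lyapunov_decay[OF lyap[rule_format, OF \<open>i \<in> P\<close>] \<open>s \<le> t\<close>])
    have "continuous_on {0..} x"
      using sol by (simp add: switched_solution_def)
    then show "continuous_on {s..t} x"
      by (rule continuous_on_subset) (use \<open>0 \<le> s\<close> in auto)
    fix u assume "s < u" "u < t"
    then have "u \<notin> disc_pts \<sigma>"
      using no_switch by auto
    then have "(x has_vector_derivative A (\<sigma> u) *v x u) (at u within {0..})"
      using sol \<open>0 \<le> s\<close> \<open>s < u\<close> by (simp add: switched_solution_def)
    moreover have "at u within {0..} = at u"
      by (rule at_within_interior) (use \<open>0 \<le> s\<close> \<open>s < u\<close> in simp)
    ultimately show "(x has_vector_derivative A i *v x u) (at u)"
      using const[OF \<open>s < u\<close> \<open>u < t\<close>] by simp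
  qed
qed

lemma switched_solution_switch_count_bound:
  assumes sol: "switched_solution A \<sigma> x" and modes: "\<forall>u\<ge>0. \<sigma> u \<in> P"
    and lyap: "\<forall>i\<in>P. quadratic_lyapunov (A i) (L i) B r" and "B \<ge> 1"
    and fin: "\<And>T. finite (disc_pts \<sigma> \<inter> {0..T})" and "0 \<le> t"
  shows "(norm (x t))^2 \<le> B ^ Suc (N_sigma \<sigma> 0 t) * exp (- 2 * r * t) * (norm (x 0))^2"
proof -
  have fin': "finite (disc_pts \<sigma> \<inter> {0<..<t})" for t
    using fin[of t] by (rule finite_subset[rotated]) auto
  have "(norm (x t))^2 \<le> B ^ Suc n * exp (- 2 * r * t) * (norm (x 0))^2"
    if "0 \<le> t" "N_sigma \<sigma> 0 t = n" for n t
    using that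
  proof (induction n arbitrary: t)
    case 0
    then have "disc_pts \<sigma> \<inter> {0<..<t} = {}"
      using fin'[of t] by (simp add: N_sigma_def)
    then show ?case
      using switched_solution_interval_bound[OF sol modes lyap order.refl \<open>0 \<le> t\<close>] by simp
  next
    case (Suc n)
    then have "disc_pts \<sigma> \<inter> {0<..<t} \<noteq> {}"
      by (auto simp: N_sigma_def)
    then obtain s where "0 < s" "s < t" and no_switch: "disc_pts \<sigma> \<inter> {s<..<t} = {}"
      and "N_sigma \<sigma> 0 t = Suc (N_sigma \<sigma> 0 s)"
      using last_point_before[OF fin'[of t]] unfolding N_sigma_def by metis
    then have IH: "(norm (x s))^2 \<le> B ^ Suc n * exp (- 2 * r * s) * (norm (x 0))^2"
      using Suc.IH[of s] Suc.prems by simp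
    have "(norm (x t))^2 \<le> B * exp (- 2 * r * (t - s)) * (norm (x s))^2"
      using switched_solution_interval_bound[OF sol modes lyap _ _ no_switch] \<open>0 < s\<close> \<open>s < t\<close>
      by simp
    also have "\<dots> \<le> B * exp (- 2 * r * (t - s)) * (B ^ Suc n * exp (- 2 * r * s) * (norm (x 0))^2)"
      using IH \<open>B \<ge> 1\<close> by (intro mult_left_mono) auto
    also have "\<dots> = B ^ Suc (Suc n) * exp (- 2 * r * t) * (norm (x 0))^2"
      by (simp add: mult_exp_exp algebra_simps)
    finally show ?case .
  qed
  then show ?thesis
    using \<open>0 \<le> t\<close> by blast
qed

lemma average_dwell_time_rate:
  assumes "B \<ge> 1" "\<tau>D > 0" "t \<ge> 0" "real k \<le> N0 + t / \<tau>D" "r \<ge> lam + ln B / (2 * \<tau>D)"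
  shows "B ^ Suc k * exp (- 2 * r * t) \<le> (exp ((1 + N0) * ln B / 2) * exp (- lam * t))^2"
proof -
  have "0 \<le> ln B"
    using \<open>B \<ge> 1\<close> by simp
  have "B ^ Suc k = exp (real (Suc k) * ln B)"
    using \<open>B \<ge> 1\<close> by (simp only: exp_of_nat_mult exp_ln_iff) simp
  then have "B ^ Suc k * exp (- 2 * r * t) = exp (real (Suc k) * ln B + - 2 * r * t)"
    by (simp only: exp_add)
  also have "\<dots> \<le> exp ((1 + N0) * ln B - 2 * lam * t)"
  proof -
    have "real (Suc k) * ln B \<le> (1 + N0 + t / \<tau>D) * ln B"
      using assms(4) \<open>0 \<le> ln B\<close> by (intro mult_right_mono) auto
    moreover have "2 * (lam + ln B / (2 * \<tau>D)) * t \<le> 2 * r * t"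
      using assms(3,5) by (intro mult_right_mono) auto
    moreover have "(1 + N0 + t / \<tau>D) * ln B = (1 + N0) * ln B + ln B * t / \<tau>D"
      by (simp add: algebra_simps)
    moreover have "2 * (lam + ln B / (2 * \<tau>D)) * t = 2 * lam * t + ln B * t / \<tau>D"
      using \<open>\<tau>D > 0\<close> by (simp add: field_simps)
    ultimately show ?thesis
      by (subst exp_le_cancel_iff) linarith
  qed
  also have "\<dots> = (exp ((1 + N0) * ln B / 2) * exp (- lam * t))^2"
    by (simp add: power2_eq_square flip: exp_add)
  finally show ?thesis .
qed

lemma S_ave_switched_solution_bound:
  assumes "\<sigma> \<in> S_ave P \<tau>D N0" "\<tau>D > 0" and sol: "switched_solution A \<sigma> x"
    and lyap: "\<forall>i\<in>P. quadratic_lyapunov (A i) (L i) B r" and "B \<ge> 1"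
    and rate: "r \<ge> lam + ln B / (2 * \<tau>D)" and "t \<ge> 0"
  shows "norm (x t) \<le> exp ((1 + N0) * ln B / 2) * exp (- lam * t) * norm (x 0)"
proof -
  from \<open>\<sigma> \<in> S_ave P \<tau>D N0\<close> have modes: "\<forall>u\<ge>0. \<sigma> u \<in> P"
    and fin: "\<And>T. finite (disc_pts \<sigma> \<inter> {0..T})"
    and average_dwell: "\<And>t0 t. 0 \<le> t0 \<Longrightarrow> t0 \<le> t \<Longrightarrow> real (N_sigma \<sigma> t0 t) \<le> N0 + (t - t0) / \<tau>D"
    unfolding S_ave_def switching_signal_def by auto
  have dwell: "real (N_sigma \<sigma> 0 t) \<le> N0 + t / \<tau>D"
    using average_dwell[OF order.refl \<open>t \<ge> 0\<close>] by simp
  have "(norm (x t))^2 \<le> B ^ Suc (N_sigma \<sigma> 0 t) * exp (- 2 * r * t) * (norm (x 0))^2"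
    by (rule switched_solution_switch_count_bound[OF sol modes lyap \<open>B \<ge> 1\<close> fin \<open>t \<ge> 0\<close>])
  also have "\<dots> \<le> (exp ((1 + N0) * ln B / 2) * exp (- lam * t) * norm (x 0))^2"
    unfolding power_mult_distrib[of _ "norm (x 0)"]
    by (intro mult_right_mono average_dwell_time_rate[OF \<open>B \<ge> 1\<close> \<open>\<tau>D > 0\<close> \<open>t \<ge> 0\<close> dwell rate])
      simp
  finally show ?thesis
    by (rule power2_le_imp_le) simp
qed

theorem lemma4:
  fixes p :: nat and M :: "nat \<Rightarrow> real^'n^'n" and N :: "real^'n^'n"
    and \<tau>D N0 lam :: real
  assumes "\<forall>i\<in>{1..p}. hurwitz (M i)"
    and "\<tau>D > 0" and "N0 > 0" and "lam > 0"
  shows "\<exists>g0>0. \<forall>g\<ge>g0. \<exists>c>0. \<forall>\<sigma>\<in>S_ave {1..p} \<tau>D N0. \<forall>x.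
           switched_solution (\<lambda>i. N + g *\<^sub>R M i) \<sigma> x \<longrightarrow>
           (\<forall>t\<ge>0. norm (x t) \<le> c * exp (- lam * t) * norm (x 0))"
proof -
  obtain L :: "nat \<Rightarrow> real^'n \<Rightarrow> complex^'n" and B K \<alpha> where "B \<ge> 1" "K \<ge> 0" "\<alpha> > 0"
    and lyap: "\<forall>g\<ge>0. \<forall>i\<in>{1..p}. quadratic_lyapunov (N + g *\<^sub>R M i) (L i) B (g * \<alpha> - K)"
    using hurwitz_family_high_gain_lyapunov[of "{1..p}" M N] assms(1) by blast
  define g0 where "g0 = (K + lam + ln B / (2 * \<tau>D)) / \<alpha>"
  have "g0 > 0"
    unfolding g0_def using \<open>B \<ge> 1\<close> \<open>K \<ge> 0\<close> \<open>\<alpha> > 0\<close> assms(2,4) by (simp add: add_pos_nonneg)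
  show ?thesis
  proof (rule exI[of _ g0], intro conjI allI impI)
    fix g assume "g \<ge> g0"
    then have rate: "g * \<alpha> - K \<ge> lam + ln B / (2 * \<tau>D)"
      using mult_right_mono[OF \<open>g \<ge> g0\<close> less_imp_le[OF \<open>\<alpha> > 0\<close>]] \<open>\<alpha> > 0\<close> by (simp add: g0_def)
    have lyap_g: "\<forall>i\<in>{1..p}. quadratic_lyapunov (N + g *\<^sub>R M i) (L i) B (g * \<alpha> - K)"
      using lyap \<open>g \<ge> g0\<close> \<open>g0 > 0\<close> by simp
    show "\<exists>c>0. \<forall>\<sigma>\<in>S_ave {1..p} \<tau>D N0. \<forall>x. switched_solution (\<lambda>i. N + g *\<^sub>R M i) \<sigma> x \<longrightarrow>
        (\<forall>t\<ge>0. norm (x t) \<le> c * exp (- lam * t) * norm (x 0))"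
    proof (intro exI[of _ "exp ((1 + N0) * ln B / 2)"] conjI ballI allI impI)
      fix \<sigma> x and t :: real
      assume "\<sigma> \<in> S_ave {1..p} \<tau>D N0" "switched_solution (\<lambda>i. N + g *\<^sub>R M i) \<sigma> x" "0 \<le> t"
      then show "norm (x t) \<le> exp ((1 + N0) * ln B / 2) * exp (- lam * t) * norm (x 0)"
        using S_ave_switched_solution_bound[OF _ assms(2) _ lyap_g \<open>B \<ge> 1\<close> rate] by blast
    qed simp
  qed (rule \<open>g0 > 0\<close>)
qed

end
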